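(* Fix $n\ge 1$. The set $\{\beta^k\,\mathcal{G}^{(\beta)}_a : k\in\mathbb{Z}_{\ge 0},\ a \text{ a weak composition of length } n\}$ is a basis of the free $\mathbb{Z}$-module $\mathbb{Z}[x_1,\dots,x_n][\beta]$. Consequently, $\{\mathcal{G}^{(-1)}_a : a \text{ a weak composition of length } n\}$ is a $\mathbb{Z}$-basis of $\mathbb{Z}[x_1,\dots,x_n]$.
   Context: A weak composition of length $n$ is a sequence $a=(a_1,\dots,a_n)$ of nonnegative integers; $|a|=\sum a_i$, and $\mathtt{flat}(a)$ is the sequence of nonzero entries of $a$ in order. A weak komposition is a weak composition in which each positive entry is colored either black or red (zero entries are uncolored); its excess $\mathrm{ex}(b)$ is the number of red entries. Let $a$ be a weak composition of length $n$ whose nonzero entries are exactly in positions $n_1<\dots<n_\ell$. A weak komposition $b$ of length $n$ is a glide of $a$ if there exist integers $0=i_0<i_1<\dots<i_\ell$ with $i_j\le n_j$ for all $j$, such that $b_k=0$ for all $k>i_\ell$, and for each $j=1,\dots,\ell$: (i) $b_{i_{j-1}+1}+\dots+b_{i_j}=\mathtt{flat}(a)_j+(\text{number of red entries among } b_{i_{j-1}+1},\dots,b_{i_j})$; (ii) the first nonzero entry among $b_{i_{j-1}+1},\dots,b_{i_j}$ is black. (Kompositions differing only in coloring are distinct glides.) With $\beta$ a formal parameter, the glide polynomial is $\mathcal{G}^{(\beta)}_a=\mathcal{G}^{(\beta)}_a(x_1,\dots,x_n)=\sum_{b}\beta^{\mathrm{ex}(b)}x_1^{b_1}\cdots x_n^{b_n}$,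 summed over all glides $b$ of $a$. *)

theory Defs
  imports Main
begin

text \<open>
Lists are 0-indexed; the paper's entry b_k (1-indexed) is b ! (k-1).
A weak composition of length n is a nat list of length n.
A weak komposition of length n is a list of pairs (value, red) of length n, where
the boolean flag red marks red entries; zero entries are uncolored, i.e. carry
the flag False.
\<close>

type_synonym komposition = "(nat \<times> bool) list"

definition is_komposition :: "nat \<Rightarrow> komposition \<Rightarrow> bool" where
  "is_komposition n b \<longleftrightarrow> length b = n \<and> (\<forall>p \<in> set b. fst p = 0 \<longrightarrow> \<not> snd p)"

definition flat :: "nat list \<Rightarrow> nat list" where
  "flat a = filter (\<lambda>x. x \<noteq> 0) a"

definition nz_pos :: "nat list \<Rightarrow> nat list" where
  "nz_pos a = filter (\<lambda>k. a ! k \<noteq> 0) [0..<length a]"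

definition ex :: "komposition \<Rightarrow> nat" where
  "ex b = length (filter snd b)"

text \<open>
The breakpoint list is = [i_0, ..., i_l] with i_0 = 0, strictly increasing,
i_j <= n_j (the paper's 1-based position of the j-th nonzero entry, i.e.
nz_pos a ! (j-1) + 1).  Block j consists of the 0-based indices [i_{j-1}, i_j),
i.e. the paper's entries b_{i_{j-1}+1}, ..., b_{i_j}.
\<close>
definition is_glide :: "nat list \<Rightarrow> komposition \<Rightarrow> bool" where
  "is_glide a b \<longleftrightarrow>
     is_komposition (length a) b \<and>
     (\<exists>is :: nat list.
        length is = length (flat a) + 1 \<and>
        is ! 0 = 0 \<and>
        (\<forall>j < length (flat a). is ! j < is ! (Suc j)) \<and>
        (\<forall>j \<in> {1..length (flat a)}. is ! j \<le> nz_pos a ! (j - 1) + 1) \<and>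
        (\<forall>k < length b. is ! length (flat a) \<le> k \<longrightarrow> fst (b ! k) = 0) \<and>
        (\<forall>j \<in> {1..length (flat a)}.
           (\<Sum>k \<in> {is ! (j - 1) ..< is ! j}. fst (b ! k))
             = flat a ! (j - 1) + card {k \<in> {is ! (j - 1) ..< is ! j}. snd (b ! k)} \<and>
           (\<forall>k \<in> {is ! (j - 1) ..< is ! j}.
              fst (b ! k) \<noteq> 0 \<and> (\<forall>k' \<in> {is ! (j - 1) ..< k}. fst (b ! k') = 0)
              \<longrightarrow> \<not> snd (b ! k))))"

text \<open>
Polynomials in Z[x_1,...,x_n][beta] are represented by their coefficient functions:
f (v, e) is the coefficient of x_1^(v!0) ... x_n^(v!(n-1)) * beta^e.
\<close>
definition polys_beta :: "nat \<Rightarrow> (nat list \<times> nat \<Rightarrow> int) set" where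
  "polys_beta n = {f. finite {m. f m \<noteq> 0} \<and> (\<forall>v e. f (v, e) \<noteq> 0 \<longrightarrow> length v = n)}"

definition polys :: "nat \<Rightarrow> (nat list \<Rightarrow> int) set" where
  "polys n = {f. finite {v. f v \<noteq> 0} \<and> (\<forall>v. f v \<noteq> 0 \<longrightarrow> length v = n)}"

definition glide_poly :: "nat list \<Rightarrow> nat list \<times> nat \<Rightarrow> int" where
  "glide_poly a = (\<lambda>(v, e). int (card {b. is_glide a b \<and> map fst b = v \<and> ex b = e}))"

definition beta_pow_mult :: "nat \<Rightarrow> (nat list \<times> nat \<Rightarrow> int) \<Rightarrow> nat list \<times> nat \<Rightarrow> int" where
  "beta_pow_mult k f = (\<lambda>(v, e). if k \<le> e then f (v, e - k) else 0)"

definition glide_poly_m1 :: "nat list \<Rightarrow> nat list \<Rightarrow> int" where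
  "glide_poly_m1 a = (\<lambda>v. \<Sum>b \<in> {b. is_glide a b \<and> map fst b = v}. (-1) ^ ex b)"

definition Z_basis :: "'i set \<Rightarrow> ('i \<Rightarrow> 'm \<Rightarrow> int) \<Rightarrow> ('m \<Rightarrow> int) set \<Rightarrow> bool" where
  "Z_basis I g M \<longleftrightarrow>
     (\<forall>i \<in> I. g i \<in> M) \<and>
     (\<forall>c :: 'i \<Rightarrow> int. finite {i. c i \<noteq> 0} \<and> {i. c i \<noteq> 0} \<subseteq> I \<and>
        (\<forall>m. (\<Sum>i \<in> {i. c i \<noteq> 0}. c i * g i m) = 0) \<longrightarrow> (\<forall>i. c i = 0)) \<and>
     (\<forall>f \<in> M. \<exists>c :: 'i \<Rightarrow> int. finite {i. c i \<noteq> 0} \<and> {i. c i \<noteq> 0} \<subseteq> I \<and>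
        f = (\<lambda>m. \<Sum>i \<in> {i. c i \<noteq> 0}. c i * g i m))"

end

theory Submission
  imports Defs
begin

text \<open>The glide polynomials are unitriangular with respect to the monomials.  A glide of \<open>a\<close>
  either is \<open>a\<close> itself, all black, or its exponent vector lies strictly above \<open>a\<close>: every red
  entry raises the degree by one, and without red entries the mass of each nonzero entry of \<open>a\<close>
  can only move to the left, which strictly increases a position weight unless nothing moved.
  So \<open>x^a\<close> is the leading term of \<open>G_a\<close>, with coefficient 1 for every value of \<open>\<beta>\<close>.
  Since the upper sets of this order are finite, such a unitriangular family is a \<open>\<int>\<close>-basis
  of the finitely supported coefficient functions.  For \<open>\<beta>^k G_a\<close> the same order is used on
  pairs (monomial, \<open>\<beta>\<close>-degree), the excess raising both degrees alike.\<close>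

definition fin_supp_on :: "'m set \<Rightarrow> ('m \<Rightarrow> int) set" where
  "fin_supp_on S = {f. finite {m. f m \<noteq> 0} \<and> {m. f m \<noteq> 0} \<subseteq> S}"

definition Z_span :: "'i set \<Rightarrow> ('i \<Rightarrow> 'm \<Rightarrow> int) \<Rightarrow> ('m \<Rightarrow> int) set" where
  "Z_span I g = {f. \<exists>c :: 'i \<Rightarrow> int. finite {i. c i \<noteq> 0} \<and> {i. c i \<noteq> 0} \<subseteq> I \<and>
     f = (\<lambda>m. \<Sum>i \<in> {i. c i \<noteq> 0}. c i * g i m)}"

lemma zero_in_Z_span: "(\<lambda>_. 0) \<in> Z_span I g"
  unfolding Z_span_def by (intro CollectI exI[of _ "\<lambda>_. 0"]) auto

lemma Z_span_add_multiple:
  assumes f: "f \<in> Z_span I g" and i: "i \<in> I"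
  shows "(\<lambda>m. f m + r * g i m) \<in> Z_span I g"
proof -
  obtain c where c: "finite {j. c j \<noteq> 0}" "{j. c j \<noteq> 0} \<subseteq> I"
    and f_eq: "f = (\<lambda>m. \<Sum>j \<in> {j. c j \<noteq> 0}. c j * g j m)"
    using f by (auto simp: Z_span_def)
  define c' where "c' = c(i := c i + r)"
  define D where "D = insert i {j. c j \<noteq> 0}"
  have D: "finite D" "{j. c j \<noteq> 0} \<subseteq> D" "{j. c' j \<noteq> 0} \<subseteq> D"
    using c(1) by (auto simp: D_def c'_def)
  have "(\<Sum>j \<in> {j. c' j \<noteq> 0}. c' j * g j m) = f m + r * g i m" for m
  proof -
    have "(\<Sum>j \<in> {j. c' j \<noteq> 0}. c' j * g j m) = (\<Sum>j \<in> D. c' j * g j m)"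
      using D by (intro sum.mono_neutral_left) auto
    also have "\<dots> = (\<Sum>j \<in> D. c j * g j m + (if j = i then r * g i m else 0))"
      by (intro sum.cong) (auto simp: c'_def algebra_simps)
    also have "\<dots> = (\<Sum>j \<in> D. c j * g j m) + r * g i m"
      using D(1) by (simp add: sum.distrib D_def)
    also have "(\<Sum>j \<in> D. c j * g j m) = f m"
      unfolding f_eq using D by (intro sum.mono_neutral_right) auto
    finally show ?thesis .
  qed
  moreover have "finite {j. c' j \<noteq> 0}"
    using D(1,3) by (rule finite_subset[rotated])
  moreover have "{j. c' j \<noteq> 0} \<subseteq> I"
    using D(3) c(2) i by (auto simp: D_def)
  ultimately show ?thesis
    unfolding Z_span_def by (intro CollectI exI[of _ c']) auto
qed

lemma unitriangular_independent:
  fixes g :: "'i \<Rightarrow> 'm \<Rightarrow> int"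
  assumes L: "inj_on L I"
    and lead: "\<And>i. i \<in> I \<Longrightarrow> g i (L i) = 1"
    and tri: "\<And>i m. i \<in> I \<Longrightarrow> g i m \<noteq> 0 \<Longrightarrow> m = L i \<or> R (L i) m"
    and R: "asymp R" "transp R"
    and c: "finite {i. c i \<noteq> 0}" "{i. c i \<noteq> 0} \<subseteq> I"
    and rel: "\<And>m. (\<Sum>i \<in> {i. c i \<noteq> 0}. c i * g i m) = 0"
  shows "c j = 0"
proof (rule ccontr)
  define C where "C = {i. c i \<noteq> 0}"
  assume "c j \<noteq> 0"
  then have "L ` C \<noteq> {}" by (auto simp: C_def)
  then obtain i0 where i0: "i0 \<in> C" and min: "\<forall>i \<in> C. L i \<noteq> L i0 \<longrightarrow> \<not> R (L i) (L i0)"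
    using Finite_Set.bex_min_element[of "L ` C" R] c(1) R
    by (auto simp: C_def intro: asymp_on_subset transp_on_subset)
  have "g i (L i0) = 0" if "i \<in> C - {i0}" for i
  proof (rule ccontr)
    assume "g i (L i0) \<noteq> 0"
    moreover have "L i \<noteq> L i0"
      using that i0 c(2) inj_onD[OF L] by (auto simp: C_def)
    ultimately show False
      using tri[of i "L i0"] min that c(2) by (auto simp: C_def)
  qed
  then have "(\<Sum>i \<in> C. c i * g i (L i0)) = c i0 * g i0 (L i0)"
    using c(1) i0 by (subst sum.remove[of _ i0]) (auto simp: C_def)
  then show False
    using rel[of "L i0"] lead[of i0] i0 c(2) by (auto simp: C_def)
qed

lemma support_sub_leading_term:
  fixes f g :: "'m \<Rightarrow> int"
  assumes lead: "g m0 = 1" and tri: "\<And>m. g m \<noteq> 0 \<Longrightarrow> m = m0 \<or> R m0 m"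
    and g: "{m. g m \<noteq> 0} \<subseteq> S" and f: "{m. f m \<noteq> 0} \<subseteq> U"
    and above: "\<forall>y \<in> S. R m0 y \<longrightarrow> y \<in> U"
  shows "{m. f m - f m0 * g m \<noteq> 0} \<subseteq> U - {m0}"
proof
  fix m assume m: "m \<in> {m. f m - f m0 * g m \<noteq> 0}"
  have "m \<noteq> m0"
    using m lead by auto
  moreover have "m \<in> U"
  proof (cases "g m = 0")
    case True
    then show ?thesis
      using m f by auto
  next
    case False
    then show ?thesis
      using tri g above \<open>m \<noteq> m0\<close> by blast
  qed
  ultimately show "m \<in> U - {m0}"
    by simp
qed

lemma unitriangular_spans_upper_set:
  fixes g :: "'i \<Rightarrow> 'm \<Rightarrow> int"
  assumes L: "bij_betw L I S"
    and lead: "\<And>i. i \<in> I \<Longrightarrow> g i (L i) = 1"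
    and tri: "\<And>i m. i \<in> I \<Longrightarrow> g i m \<noteq> 0 \<Longrightarrow> m = L i \<or> R (L i) m"
    and g: "\<And>i. i \<in> I \<Longrightarrow> g i \<in> fin_supp_on S"
    and R: "asymp R" "transp R"
    and U: "finite U" "U \<subseteq> S" "\<forall>x \<in> U. \<forall>y \<in> S. R x y \<longrightarrow> y \<in> U"
    and f: "{m. f m \<noteq> 0} \<subseteq> U"
  shows "f \<in> Z_span I g"
  using U f
proof (induction "card U" arbitrary: U f rule: less_induct)
  case less
  show ?case
  proof (cases "U = {}")
    case True
    then have "f = (\<lambda>_. 0)"
      using less.prems(4) by auto
    then show ?thesis
      by (simp add: zero_in_Z_span)
  next
    case False
    then obtain m0 where m0: "m0 \<in> U" and min: "\<forall>m \<in> U. m \<noteq> m0 \<longrightarrow> \<not> R m m0"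
      using Finite_Set.bex_min_element[of U R] less.prems(1) R
      by (auto intro: asymp_on_subset transp_on_subset)
    obtain i0 where i0: "i0 \<in> I" "L i0 = m0"
      using L m0 less.prems(2) by (auto simp: bij_betw_def)
    define f' where "f' = (\<lambda>m. f m - f m0 * g i0 m)"
    have "{m. f' m \<noteq> 0} \<subseteq> U - {m0}"
      unfolding f'_def using lead tri g i0 less.prems(3,4) m0
      by (intro support_sub_leading_term[where R = R and S = S]) (auto simp: fin_supp_on_def)
    moreover have "\<forall>x \<in> U - {m0}. \<forall>y \<in> S. R x y \<longrightarrow> y \<in> U - {m0}"
      using less.prems(3) min by blast
    moreover have "card (U - {m0}) < card U"
      using less.prems(1) m0 by (rule card_Diff1_less)
    ultimately have "f' \<in> Z_span I g"
      using less.hyps less.prems(1,2) by blast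
    then have "(\<lambda>m. f' m + f m0 * g i0 m) \<in> Z_span I g"
      using i0(1) by (rule Z_span_add_multiple)
    then show ?thesis
      by (simp add: f'_def)
  qed
qed

lemma unitriangular_spans:
  fixes g :: "'i \<Rightarrow> 'm \<Rightarrow> int"
  assumes L: "bij_betw L I S"
    and lead: "\<And>i. i \<in> I \<Longrightarrow> g i (L i) = 1"
    and tri: "\<And>i m. i \<in> I \<Longrightarrow> g i m \<noteq> 0 \<Longrightarrow> m = L i \<or> R (L i) m"
    and g: "\<And>i. i \<in> I \<Longrightarrow> g i \<in> fin_supp_on S"
    and R: "asymp R" "transp R"
    and finite_above: "\<And>x. x \<in> S \<Longrightarrow> finite {y \<in> S. R x y}"
    and f: "f \<in> fin_supp_on S"
  shows "f \<in> Z_span I g"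
proof -
  define F where "F = {m. f m \<noteq> 0}"
  have "finite F" "F \<subseteq> S"
    using f by (auto simp: F_def fin_supp_on_def)
  then show ?thesis
    using finite_above transpD[OF R(2)]
    by (intro unitriangular_spans_upper_set[OF L lead tri g R,
          of "F \<union> (\<Union>x \<in> F. {y \<in> S. R x y})"]) (auto simp: F_def)
qed

lemma unitriangular_Z_basis:
  fixes g :: "'i \<Rightarrow> 'm \<Rightarrow> int"
  assumes L: "bij_betw L I S"
    and lead: "\<And>i. i \<in> I \<Longrightarrow> g i (L i) = 1"
    and tri: "\<And>i m. i \<in> I \<Longrightarrow> g i m \<noteq> 0 \<Longrightarrow> m = L i \<or> R (L i) m"
    and g: "\<And>i. i \<in> I \<Longrightarrow> g i \<in> fin_supp_on S"
    and R: "asymp R" "transp R"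
    and finite_above: "\<And>x. x \<in> S \<Longrightarrow> finite {y \<in> S. R x y}"
  shows "Z_basis I g (fin_supp_on S)"
  unfolding Z_basis_def
proof (intro conjI ballI allI impI)
  show "g i \<in> fin_supp_on S" if "i \<in> I" for i
    using g that .
  show "c i = 0" if "finite {i. c i \<noteq> 0} \<and> {i. c i \<noteq> 0} \<subseteq> I \<and>
      (\<forall>m. (\<Sum>i \<in> {i. c i \<noteq> 0}. c i * g i m) = 0)" for c :: "'i \<Rightarrow> int" and i
    using unitriangular_independent[of L I g R c] L lead tri R that by (auto simp: bij_betw_def)
  show "\<exists>c. finite {i. c i \<noteq> 0} \<and> {i. c i \<noteq> 0} \<subseteq> I \<and> f = (\<lambda>m. \<Sum>i \<in> {i. c i \<noteq> 0}. c i * g i m)"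
    if "f \<in> fin_supp_on S" for f
    using unitriangular_spans[OF assms that] by (simp add: Z_span_def)
qed

lemma flat_conv_nz_pos: "flat a = map (nth a) (nz_pos a)"
proof -
  have "flat a = filter (\<lambda>x. x \<noteq> 0) (map (nth a) [0..<length a])"
    by (simp add: flat_def map_nth)
  also have "\<dots> = map (nth a) (nz_pos a)"
    by (simp add: nz_pos_def filter_map comp_def)
  finally show ?thesis .
qed

lemma length_nz_pos: "length (nz_pos a) = length (flat a)"
  by (simp add: flat_conv_nz_pos)

lemma set_nz_pos: "set (nz_pos a) = {k. k < length a \<and> a ! k \<noteq> 0}"
  by (auto simp: nz_pos_def)

lemma nth_flat: "j < length (flat a) \<Longrightarrow> flat a ! j = a ! (nz_pos a ! j)"
  by (simp add: flat_conv_nz_pos)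

lemma nth_flat_pos: "j < length (flat a) \<Longrightarrow> 0 < flat a ! j"
  using nth_mem[of j "flat a"] by (auto simp: flat_def)

lemma nz_pos_less_length: "j < length (flat a) \<Longrightarrow> nz_pos a ! j < length a"
  using nth_mem[of j "nz_pos a"] by (simp add: length_nz_pos set_nz_pos)

lemma nonzero_in_nz_pos:
  "k < length a \<Longrightarrow> a ! k \<noteq> 0 \<Longrightarrow> \<exists>j < length (flat a). nz_pos a ! j = k"
  using set_nz_pos[of a] by (auto simp: in_set_conv_nth length_nz_pos)

lemma nz_pos_less_iff:
  assumes "i < length (flat a)" "j < length (flat a)"
  shows "nz_pos a ! i < nz_pos a ! j \<longleftrightarrow> i < j"
proof -
  have sorted: "sorted_wrt (<) (nz_pos a)"
    unfolding nz_pos_def by (rule sorted_wrt_filter) simp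
  show ?thesis
    using sorted_wrt_nth_less[OF sorted, of i j] sorted_wrt_nth_less[OF sorted, of j i] assms
    by (cases i j rule: linorder_cases) (auto simp: length_nz_pos)
qed

lemma card_filter_eq_sum: "finite A \<Longrightarrow> card {k \<in> A. P k} = (\<Sum>k \<in> A. if P k then 1 else 0)"
  by (simp add: sum.inter_filter[symmetric])

lemma sum_list_flat: "sum_list (flat a) = sum_list a"
  unfolding flat_def by (induction a) auto

text \<open>Moving mass to the left increases this weight.\<close>
definition left_weight :: "nat list \<Rightarrow> nat" where
  "left_weight v = (\<Sum>k < length v. v ! k * (length v - k))"

lemma left_weight_conv_nz_pos:
  "left_weight a = (\<Sum>j < length (flat a). flat a ! j * (length a - nz_pos a ! j))"
proof -
  let ?h = "\<lambda>k. a ! k * (length a - k)"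
  have "left_weight a = (\<Sum>k \<in> set (nz_pos a). ?h k)"
    unfolding left_weight_def by (rule sum.mono_neutral_right) (auto simp: set_nz_pos)
  also have "\<dots> = sum_list (map ?h (nz_pos a))"
    by (rule sum.distinct_set_conv_list) (simp add: nz_pos_def)
  also have "\<dots> = (\<Sum>j < length (flat a). ?h (nz_pos a ! j))"
    by (simp add: sum_list_sum_nth length_nz_pos atLeast0LessThan)
  also have "\<dots> = (\<Sum>j < length (flat a). flat a ! j * (length a - nz_pos a ! j))"
    by (simp add: nth_flat)
  finally show ?thesis .
qed

text \<open>The breakpoints \<open>t\<close> of a glide, indexed from 0: block \<open>j\<close> is \<open>{t ! j..<t ! Suc j}\<close>
  and carries the \<open>j\<close>-th nonzero entry of \<open>a\<close>.\<close>
locale glide_breaks =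
  fixes a :: "nat list" and b :: komposition and t :: "nat list"
  assumes komposition: "is_komposition (length a) b"
    and length_breaks: "length t = length (flat a) + 1"
    and first_break: "t ! 0 = 0"
    and breaks_increasing: "j < length (flat a) \<Longrightarrow> t ! j < t ! Suc j"
    and break_le_nz_pos: "j < length (flat a) \<Longrightarrow> t ! Suc j \<le> nz_pos a ! j + 1"
    and zero_after_breaks: "k < length b \<Longrightarrow> t ! length (flat a) \<le> k \<Longrightarrow> fst (b ! k) = 0"
    and block_sum: "j < length (flat a) \<Longrightarrow>
      (\<Sum>k \<in> {t ! j..<t ! Suc j}. fst (b ! k))
        = flat a ! j + card {k \<in> {t ! j..<t ! Suc j}. snd (b ! k)}"
    and block_first_black: "j < length (flat a) \<Longrightarrow> k \<in> {t ! j..<t ! Suc j} \<Longrightarrow>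
      fst (b ! k) \<noteq> 0 \<Longrightarrow> \<forall>k' \<in> {t ! j..<k}. fst (b ! k') = 0 \<Longrightarrow> \<not> snd (b ! k)"

lemma ball_atLeastAtMost_1_conv: "(\<forall>j \<in> {1..m}. P j) \<longleftrightarrow> (\<forall>j < m. P (Suc j))"
  by (metis Suc_le_eq atLeastAtMost_iff le_add1 not0_implies_Suc not_one_le_zero plus_1_eq_Suc)

lemma is_glide_iff_glide_breaks: "is_glide a b \<longleftrightarrow> (\<exists>t. glide_breaks a b t)"
  unfolding is_glide_def glide_breaks_def ball_atLeastAtMost_1_conv
  by (auto simp: Ball_def)

context glide_breaks
begin

abbreviation block :: "nat \<Rightarrow> nat set" where
  "block j \<equiv> {t ! j..<t ! Suc j}"

lemma length_komposition: "length b = length a"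
  using komposition by (simp add: is_komposition_def)

lemma red_imp_nonzero: "k < length a \<Longrightarrow> snd (b ! k) \<Longrightarrow> fst (b ! k) \<noteq> 0"
  using komposition nth_mem[of k b] by (auto simp: is_komposition_def)

lemma breaks_mono: "i \<le> j \<Longrightarrow> j \<le> length (flat a) \<Longrightarrow> t ! i \<le> t ! j"
  by (rule lift_Suc_mono_le_ivl[where f = "(!) t" and N = "{..<length (flat a)}"])
    (auto simp: breaks_increasing less_imp_le)

lemma last_break_le_length: "t ! length (flat a) \<le> length a"
proof (cases "length (flat a)")
  case (Suc m)
  then show ?thesis
    using break_le_nz_pos[of m] nz_pos_less_length[of m a] by simp
qed (simp add: first_break)

lemma block_le_nz_pos: "j < length (flat a) \<Longrightarrow> k \<in> block j \<Longrightarrow> k \<le> nz_pos a ! j"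
  using break_le_nz_pos[of j] by auto

lemma block_less_length: "j < length (flat a) \<Longrightarrow> k \<in> block j \<Longrightarrow> k < length a"
  using breaks_mono[of "Suc j" "length (flat a)"] last_break_le_length by auto

lemma in_some_block:
  assumes "k < t ! length (flat a)"
  shows "\<exists>j < length (flat a). k \<in> block j"
proof -
  have "\<exists>j < m. k \<in> block j" if "k < t ! m" for m
    using that
  proof (induction m)
    case (Suc m)
    then show ?case
      by (cases "k < t ! m") (auto intro: less_SucI)
  qed (simp add: first_break)
  then show ?thesis
    using assms .
qed

lemma sum_over_blocks:
  fixes h :: "nat \<Rightarrow> 'c::comm_monoid_add"
  assumes "\<And>k. t ! length (flat a) \<le> k \<Longrightarrow> k < length a \<Longrightarrow> h k = 0"
  shows "(\<Sum>k < length a. h k) = (\<Sum>j < length (flat a). \<Sum>k \<in> block j. h k)"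
proof -
  have "(\<Sum>k < t ! m. h k) = (\<Sum>j < m. \<Sum>k \<in> block j. h k)" if "m \<le> length (flat a)" for m
    using that
  proof (induction m)
    case 0
    then show ?case by (simp add: first_break)
  next
    case (Suc m)
    have "(\<Sum>k < t ! Suc m. h k) = (\<Sum>k < t ! m. h k) + (\<Sum>k \<in> block m. h k)"
      using breaks_increasing[of m] Suc.prems
      by (simp add: lessThan_atLeast0 sum.atLeastLessThan_concat)
    then show ?case
      using Suc by simp
  qed
  moreover have "(\<Sum>k < length a. h k) = (\<Sum>k < t ! length (flat a). h k)"
    using assms last_break_le_length by (intro sum.mono_neutral_right) auto
  ultimately show ?thesis by simp
qed

lemma ex_conv_blocks: "ex b = (\<Sum>j < length (flat a). card {k \<in> block j. snd (b ! k)})"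
proof -
  have "ex b = card {k \<in> {..<length a}. snd (b ! k)}"
    unfolding ex_def length_filter_conv_card length_komposition by (rule arg_cong[where f = card]) auto
  also have "\<dots> = (\<Sum>k < length a. if snd (b ! k) then 1 else 0)"
    by (rule card_filter_eq_sum) simp
  also have "\<dots> = (\<Sum>j < length (flat a). \<Sum>k \<in> block j. if snd (b ! k) then 1 else 0)"
    using red_imp_nonzero zero_after_breaks length_komposition by (intro sum_over_blocks) fastforce
  also have "\<dots> = (\<Sum>j < length (flat a). card {k \<in> block j. snd (b ! k)})"
    by (intro sum.cong refl card_filter_eq_sum[symmetric]) simp
  finally show ?thesis .
qed

lemma sum_list_values: "sum_list (map fst b) = sum_list a + ex b"
proof -
  have "sum_list (map fst b) = (\<Sum>k < length a. fst (b ! k))"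
    by (simp add: sum_list_sum_nth length_komposition lessThan_atLeast0)
  also have "\<dots> = (\<Sum>j < length (flat a). \<Sum>k \<in> block j. fst (b ! k))"
    using zero_after_breaks length_komposition by (intro sum_over_blocks) auto
  also have "\<dots> = (\<Sum>j < length (flat a). flat a ! j + card {k \<in> block j. snd (b ! k)})"
    by (simp add: block_sum)
  also have "\<dots> = sum_list a + ex b"
    using sum_list_sum_nth[of "flat a"]
    by (simp add: sum.distrib ex_conv_blocks lessThan_atLeast0 sum_list_flat)
  finally show ?thesis .
qed

lemma card_red_less_card_nonzero:
  assumes j: "j < length (flat a)"
  shows "card {k \<in> block j. snd (b ! k)} < card {k \<in> block j. fst (b ! k) \<noteq> 0}"
proof -
  define N where "N = {k \<in> block j. fst (b ! k) \<noteq> 0}"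
  have "N \<noteq> {}"
  proof
    assume "N = {}"
    then have "(\<Sum>k \<in> block j. fst (b ! k)) = 0"
      by (intro sum.neutral) (auto simp: N_def)
    then show False
      using block_sum[OF j] nth_flat_pos[OF j] by simp
  qed
  have "finite N"
    by (simp add: N_def)
  have min_in: "Min N \<in> N"
    using \<open>finite N\<close> \<open>N \<noteq> {}\<close> by (rule Min_in)
  have before_min: "\<forall>k' \<in> {t ! j..<Min N}. fst (b ! k') = 0"
  proof (rule ballI, rule ccontr)
    fix k' assume k': "k' \<in> {t ! j..<Min N}" and "fst (b ! k') \<noteq> 0"
    then have "k' \<in> N"
      using min_in by (auto simp: N_def)
    then show False
      using Min_le[OF \<open>finite N\<close>] k' by (meson atLeastLessThan_iff not_le)
  qed
  have "\<not> snd (b ! Min N)"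
    using block_first_black[OF j, of "Min N"] min_in before_min unfolding N_def by blast
  moreover have "{k \<in> block j. snd (b ! k)} \<subseteq> N"
    using red_imp_nonzero block_less_length[OF j] by (auto simp: N_def)
  ultimately have "{k \<in> block j. snd (b ! k)} \<subset> N"
    using min_in by blast
  then show ?thesis
    unfolding N_def by (rule psubset_card_mono[rotated]) simp
qed

lemma length_flat_values: "length (flat a) + ex b \<le> length (flat (map fst b))"
proof -
  have "length (flat a) + ex b = (\<Sum>j < length (flat a). Suc (card {k \<in> block j. snd (b ! k)}))"
    by (simp only: sum_Suc ex_conv_blocks card_lessThan add.commute)
  also have "\<dots> \<le> (\<Sum>j < length (flat a). card {k \<in> block j. fst (b ! k) \<noteq> 0})"
    by (intro sum_mono Suc_leI card_red_less_card_nonzero) simp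
  also have "\<dots> = (\<Sum>j < length (flat a). \<Sum>k \<in> block j. if fst (b ! k) \<noteq> 0 then 1 else 0)"
    by (intro sum.cong refl card_filter_eq_sum) simp
  also have "\<dots> = (\<Sum>k < length a. if fst (b ! k) \<noteq> 0 then 1 else 0)"
    using zero_after_breaks length_komposition by (intro sum_over_blocks[symmetric]) auto
  also have "\<dots> = card {k \<in> {..<length a}. fst (b ! k) \<noteq> 0}"
    by (rule card_filter_eq_sum[symmetric]) simp
  also have "\<dots> = length (flat (map fst b))"
    unfolding flat_def length_filter_conv_card
    by (rule arg_cong[where f = card]) (auto simp: length_komposition)
  finally show ?thesis .
qed

lemma left_weight_values:
  "left_weight (map fst b) = (\<Sum>j < length (flat a). \<Sum>k \<in> block j. fst (b ! k) * (length a - k))"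
  unfolding left_weight_def using zero_after_breaks length_komposition
  by (simp add: sum_over_blocks)

lemma block_weight_at_nz_pos:
  "j < length (flat a) \<Longrightarrow> (\<Sum>k \<in> block j. fst (b ! k) * (length a - nz_pos a ! j))
     = (flat a ! j + card {k \<in> block j. snd (b ! k)}) * (length a - nz_pos a ! j)"
  by (simp add: block_sum sum_distrib_right[symmetric])

lemma block_weight_le:
  "j < length (flat a) \<Longrightarrow> (\<Sum>k \<in> block j. fst (b ! k) * (length a - nz_pos a ! j))
     \<le> (\<Sum>k \<in> block j. fst (b ! k) * (length a - k))"
  by (intro sum_mono mult_le_mono2 diff_le_mono2 block_le_nz_pos)

lemma left_weight_le: "left_weight a \<le> left_weight (map fst b)"
  unfolding left_weight_values left_weight_conv_nz_pos[of a]
proof (rule sum_mono)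
  fix j assume "j \<in> {..<length (flat a)}"
  then have j: "j < length (flat a)" by simp
  have "flat a ! j * (length a - nz_pos a ! j)
      \<le> (flat a ! j + card {k \<in> block j. snd (b ! k)}) * (length a - nz_pos a ! j)"
    by simp
  also have "\<dots> \<le> (\<Sum>k \<in> block j. fst (b ! k) * (length a - k))"
    using block_weight_at_nz_pos[OF j] block_weight_le[OF j] by simp
  finally show "flat a ! j * (length a - nz_pos a ! j) \<le> (\<Sum>k \<in> block j. fst (b ! k) * (length a - k))" .
qed

end

locale glide_breaks_weight_eq = glide_breaks +
  assumes no_red: "ex b = 0"
    and weight_eq: "left_weight (map fst b) = left_weight a"
begin

lemma no_red_in_block: "j < length (flat a) \<Longrightarrow> card {k \<in> block j. snd (b ! k)} = 0"
  using no_red by (simp add: ex_conv_blocks)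

lemma block_weight_eq:
  assumes j: "j < length (flat a)"
  shows "(\<Sum>k \<in> block j. fst (b ! k) * (length a - nz_pos a ! j))
    = (\<Sum>k \<in> block j. fst (b ! k) * (length a - k))"
proof -
  have "(\<Sum>j < length (flat a). \<Sum>k \<in> block j. fst (b ! k) * (length a - nz_pos a ! j))
      = left_weight a"
    unfolding left_weight_conv_nz_pos[of a]
    by (intro sum.cong refl) (simp only: lessThan_iff block_weight_at_nz_pos no_red_in_block add_0_right)
  also have "\<dots> = (\<Sum>j < length (flat a). \<Sum>k \<in> block j. fst (b ! k) * (length a - k))"
    by (simp only: weight_eq[symmetric] left_weight_values)
  finally show ?thesis
    by (rule sum_mono_inv) (use j block_weight_le in auto)
qed

lemma zero_before_nz_pos:
  assumes j: "j < length (flat a)" and k: "k \<in> block j" "k < nz_pos a ! j"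
  shows "fst (b ! k) = 0"
proof -
  have "fst (b ! k) * (length a - nz_pos a ! j) = fst (b ! k) * (length a - k)"
    by (rule sum_mono_inv[OF block_weight_eq[OF j]])
      (use k(1) block_le_nz_pos[OF j] in \<open>auto intro: mult_le_mono2 diff_le_mono2\<close>)
  moreover have "length a - nz_pos a ! j < length a - k"
    using k(2) nz_pos_less_length[OF j] by simp
  ultimately show ?thesis
    by simp
qed

lemma value_at_nz_pos:
  assumes j: "j < length (flat a)"
  shows "fst (b ! (nz_pos a ! j)) = flat a ! j"
proof -
  have before: "fst (b ! k) = 0" if "k \<in> block j - {nz_pos a ! j}" for k
    using that zero_before_nz_pos[OF j] block_le_nz_pos[OF j] by fastforce
  have "nz_pos a ! j \<in> block j"
  proof (rule ccontr)
    assume "nz_pos a ! j \<notin> block j"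
    then have "(\<Sum>k \<in> block j. fst (b ! k)) = 0"
      using before by (intro sum.neutral) blast
    then show False
      using block_sum[OF j] nth_flat_pos[OF j] by simp
  qed
  then have "(\<Sum>k \<in> block j. fst (b ! k)) = fst (b ! (nz_pos a ! j))"
    using before by (subst sum.remove) (auto intro: sum.neutral)
  then show ?thesis
    using block_sum[OF j] no_red_in_block[OF j] by linarith
qed

lemma values_eq: "map fst b = a"
proof (rule nth_equalityI)
  show "length (map fst b) = length a"
    by (simp add: length_komposition)
  fix k assume "k < length (map fst b)"
  then have k: "k < length a"
    by (simp add: length_komposition)
  show "map fst b ! k = a ! k"
  proof (cases "a ! k = 0")
    case False
    then obtain j where "j < length (flat a)" "nz_pos a ! j = k"
      using nonzero_in_nz_pos[OF k] by blast
    then show ?thesis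
      using value_at_nz_pos nth_flat k by (auto simp: length_komposition)
  next
    case True
    have "fst (b ! k) = 0"
    proof (cases "k < t ! length (flat a)")
      case True
      then obtain j where j: "j < length (flat a)" "k \<in> block j"
        using in_some_block by blast
      moreover have "k \<noteq> nz_pos a ! j"
        using \<open>a ! k = 0\<close> nth_flat_pos[OF j(1)] nth_flat[OF j(1)] by auto
      ultimately show ?thesis
        using zero_before_nz_pos block_le_nz_pos by fastforce
    qed (use zero_after_breaks k length_komposition in auto)
    then show ?thesis
      using True k by (simp add: length_komposition)
  qed
qed

end

definition all_black :: "nat list \<Rightarrow> komposition" where
  "all_black a = map (\<lambda>x. (x, False)) a"

definition nz_breaks :: "nat list \<Rightarrow> nat list" where
  "nz_breaks a = 0 # map Suc (nz_pos a)"

lemma nz_breaks_Suc: "j < length (flat a) \<Longrightarrow> nz_breaks a ! Suc j = Suc (nz_pos a ! j)"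
  by (simp add: nz_breaks_def length_nz_pos)

lemma nz_breaks_le_nz_pos:
  assumes "j < length (flat a)"
  shows "nz_breaks a ! j \<le> nz_pos a ! j"
proof (cases j)
  case (Suc i)
  then show ?thesis
    using assms nz_breaks_Suc[of i a] nz_pos_less_iff[of i a j] by simp
qed (simp add: nz_breaks_def)

lemma le_if_nz_breaks_le_nz_pos:
  assumes "i < length (flat a)" "j \<le> length (flat a)" "nz_breaks a ! j \<le> nz_pos a ! i"
  shows "j \<le> i"
proof (cases j)
  case (Suc j')
  then show ?thesis
    using assms nz_breaks_Suc[of j' a] nz_pos_less_iff[of j' a i] by simp
qed simp

lemma nonzero_in_nz_block:
  assumes j: "j < length (flat a)" and k: "k \<in> {nz_breaks a ! j..<nz_breaks a ! Suc j}"
    and nonzero: "k < length a" "a ! k \<noteq> 0"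
  shows "k = nz_pos a ! j"
proof -
  obtain i where i: "i < length (flat a)" "nz_pos a ! i = k"
    using nonzero_in_nz_pos nonzero by blast
  then have "j \<le> i" "i \<le> j"
    using j k le_if_nz_breaks_le_nz_pos[of i a j] nz_breaks_Suc[OF j] nz_pos_less_iff[of j a i]
    by auto
  then show ?thesis
    using i by simp
qed

lemma glide_breaks_all_black: "glide_breaks a (all_black a) (nz_breaks a)"
proof -
  let ?l = "length (flat a)" and ?t = "nz_breaks a"
  have block_sum: "(\<Sum>k \<in> {?t ! j..<?t ! Suc j}. fst (all_black a ! k))
      = flat a ! j + card {k \<in> {?t ! j..<?t ! Suc j}. snd (all_black a ! k)}" if j: "j < ?l" for j
  proof -
    have in_bounds: "k < length a" if "k \<in> {?t ! j..<?t ! Suc j}" for k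
      using that nz_breaks_Suc[OF j] nz_pos_less_length[OF j] by simp
    have "(\<Sum>k \<in> {?t ! j..<?t ! Suc j}. a ! k)
        = a ! (nz_pos a ! j) + (\<Sum>k \<in> {?t ! j..<?t ! Suc j} - {nz_pos a ! j}. a ! k)"
      using nz_breaks_le_nz_pos[OF j] nz_breaks_Suc[OF j] by (intro sum.remove) simp_all
    also have "(\<Sum>k \<in> {?t ! j..<?t ! Suc j} - {nz_pos a ! j}. a ! k) = 0"
      using in_bounds nonzero_in_nz_block[OF j] by (intro sum.neutral) auto
    finally show ?thesis
      using in_bounds by (simp add: all_black_def nth_flat[OF j])
  qed
  have zero_after_breaks: "fst (all_black a ! k) = 0"
    if k: "k < length (all_black a)" "?t ! ?l \<le> k" for k
  proof (rule ccontr)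
    assume "fst (all_black a ! k) \<noteq> 0"
    then obtain i where i: "i < ?l" "nz_pos a ! i = k"
      using nonzero_in_nz_pos[of k a] k(1) by (auto simp: all_black_def)
    have "?l \<le> i"
      by (rule le_if_nz_breaks_le_nz_pos) (use i k(2) in auto)
    then show False
      using i(1) by simp
  qed
  show ?thesis
  proof (rule glide_breaks.intro[OF _ _ _ _ _ zero_after_breaks block_sum])
    show "is_komposition (length a) (all_black a)"
      by (simp add: is_komposition_def all_black_def)
    show "length ?t = ?l + 1" "?t ! 0 = 0"
      by (simp_all add: nz_breaks_def length_nz_pos)
    show "?t ! j < ?t ! Suc j" "?t ! Suc j \<le> nz_pos a ! j + 1" if "j < ?l" for j
      using that nz_breaks_le_nz_pos nz_breaks_Suc by (auto simp: less_Suc_eq_le)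
    show "\<not> snd (all_black a ! k)" if "j < ?l" "k \<in> {?t ! j..<?t ! Suc j}" for j k
      using that nz_pos_less_length[of j a] nz_breaks_Suc[of j a] by (simp add: all_black_def)
  qed
qed

lemma is_glide_all_black: "is_glide a (all_black a)"
  using glide_breaks_all_black is_glide_iff_glide_breaks by blast

lemma length_glide: "is_glide a b \<Longrightarrow> length b = length a"
  by (auto simp: is_glide_def is_komposition_def)

lemma sum_list_glide: "is_glide a b \<Longrightarrow> sum_list (map fst b) = sum_list a + ex b"
  using glide_breaks.sum_list_values is_glide_iff_glide_breaks by blast

lemma finite_glides: "finite {b. is_glide a b}"
proof (rule finite_subset)
  let ?A = "{0..sum_list a + length a} \<times> (UNIV :: bool set)"
  show "{b. is_glide a b} \<subseteq> {b. set b \<subseteq> ?A \<and> length b = length a}"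
  proof (safe)
    fix b x red assume b: "is_glide a b" and "(x, red) \<in> set b"
    then have "x \<in> set (map fst b)"
      by force
    then have "x \<le> sum_list (map fst b)"
      by (simp add: member_le_sum_list)
    moreover have "ex b \<le> length b"
      by (simp add: ex_def)
    ultimately show "x \<in> {0..sum_list a + length a}"
      using sum_list_glide[OF b] length_glide[OF b] by simp
  qed (auto dest: length_glide)
  show "finite {b. set b \<subseteq> ?A \<and> length b = length a}"
    by (rule finite_lists_length_eq) simp
qed

text \<open>The third clause bounds \<open>sum_list w\<close> by \<open>sum_list v + length v\<close>, so only finitely many
  \<open>w\<close> lie above a given \<open>v\<close>.\<close>
definition precedes :: "nat list \<Rightarrow> nat list \<Rightarrow> bool" where
  "precedes v w \<longleftrightarrow> length w = length v \<and> sum_list v \<le> sum_list w \<and>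
     sum_list w + length (flat v) \<le> sum_list v + length (flat w) \<and>
     (sum_list v < sum_list w \<or> sum_list v = sum_list w \<and> left_weight v < left_weight w)"

lemma asymp_precedes: "asymp precedes"
  by (rule asympI) (unfold precedes_def, linarith)

lemma transp_precedes: "transp precedes"
  by (rule transpI) (unfold precedes_def, linarith)

lemma finite_precedes: "finite {w. precedes v w}"
proof (rule finite_subset)
  let ?N = "sum_list v + length v"
  show "{w. precedes v w} \<subseteq> {w. set w \<subseteq> {0..?N} \<and> length w = length v}"
  proof safe
    fix w x assume w: "precedes v w" and "x \<in> set w"
    then have "x \<le> sum_list w"
      by (simp add: member_le_sum_list)
    moreover have "length (flat w) \<le> length w"
      by (simp add: flat_def)
    ultimately show "x \<in> {0..?N}"
      using w by (auto simp: precedes_def)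
  qed (simp add: precedes_def)
  show "finite {w. set w \<subseteq> {0..?N} \<and> length w = length v}"
    by (rule finite_lists_length_eq) simp
qed

lemma glide_all_black_or_precedes:
  assumes "is_glide a b"
  shows "b = all_black a \<or> precedes a (map fst b)"
proof -
  obtain t where "glide_breaks a b t"
    using assms is_glide_iff_glide_breaks by blast
  then interpret glide_breaks a b t .
  have precedes_if: "precedes a (map fst b)"
    if "0 < ex b \<or> left_weight a < left_weight (map fst b)"
    using that sum_list_values length_flat_values length_komposition by (auto simp: precedes_def)
  show ?thesis
  proof (cases "ex b = 0 \<and> left_weight (map fst b) = left_weight a")
    case True
    then interpret glide_breaks_weight_eq a b t
      by unfold_locales auto
    have "\<not> snd (b ! k)" if "k < length b" for k
      using no_red that by (auto simp: ex_def filter_empty_conv)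
    then have "b = all_black a"
      using values_eq[symmetric] by (auto intro!: nth_equalityI simp: prod_eq_iff all_black_def)
    then show ?thesis ..
  next
    case False
    then have "0 < ex b \<or> left_weight a < left_weight (map fst b)"
      using left_weight_le by auto
    then show ?thesis
      using precedes_if by blast
  qed
qed

lemma glides_with_values_self: "{b. is_glide a b \<and> map fst b = a} = {all_black a}"
  using glide_all_black_or_precedes is_glide_all_black
  by (auto simp: precedes_def all_black_def comp_def)

lemma glide_poly_m1_nonzero:
  assumes "glide_poly_m1 a v \<noteq> 0"
  obtains b where "is_glide a b" "map fst b = v"
proof -
  have "{b. is_glide a b \<and> map fst b = v} \<noteq> {}"
  proof
    assume no_glides: "{b. is_glide a b \<and> map fst b = v} = {}"
    show False
      using assms unfolding glide_poly_m1_def no_glides by simp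
  qed
  then show ?thesis
    using that by blast
qed

lemma beta_pow_mult_glide_poly_nonzero:
  assumes "beta_pow_mult k (glide_poly a) (v, e) \<noteq> 0"
  obtains b where "is_glide a b" "map fst b = v" "k + ex b = e"
proof -
  have "beta_pow_mult k (glide_poly a) (v, e)
      = (if k \<le> e then int (card {b. is_glide a b \<and> map fst b = v \<and> ex b = e - k}) else 0)"
    by (simp add: beta_pow_mult_def glide_poly_def)
  then have "k \<le> e" and "card {b. is_glide a b \<and> map fst b = v \<and> ex b = e - k} \<noteq> 0"
    using assms by (auto split: if_splits)
  moreover from this(2) obtain b where "is_glide a b" "map fst b = v" "ex b = e - k"
    by (metis (mono_tags, lifting) card.empty empty_Collect_eq)
  ultimately show ?thesis
    using that by simp
qed

lemma glide_poly_m1_Z_basis: "Z_basis {a. length a = n} glide_poly_m1 (polys n)"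
proof -
  have polys: "polys n = fin_supp_on {v. length v = n}"
    by (auto simp: polys_def fin_supp_on_def)
  show ?thesis
    unfolding polys
  proof (rule unitriangular_Z_basis[where L = id and R = precedes])
    show "glide_poly_m1 a (id a) = 1" for a
      by (simp add: glide_poly_m1_def glides_with_values_self ex_def all_black_def)
    show "v = id a \<or> precedes (id a) v" if "glide_poly_m1 a v \<noteq> 0" for a v
      using that
    proof (rule glide_poly_m1_nonzero)
      fix b assume b: "is_glide a b" "map fst b = v"
      then show ?thesis
        using glide_all_black_or_precedes[OF b(1)] by (auto simp: all_black_def comp_def)
    qed
    show "glide_poly_m1 a \<in> fin_supp_on {v. length v = n}" if "a \<in> {a. length a = n}" for a
    proof -
      have "{v. glide_poly_m1 a v \<noteq> 0} \<subseteq> map fst ` {b. is_glide a b}"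
        by (blast elim: glide_poly_m1_nonzero)
      then show ?thesis
        using that finite_glides length_glide
        by (force simp: fin_supp_on_def intro: finite_surj elim: glide_poly_m1_nonzero)
    qed
    show "finite {w \<in> {v. length v = n}. precedes v w}" for v
      using finite_precedes[of v] by (rule finite_subset[rotated]) blast
  qed (simp_all add: asymp_precedes transp_precedes)
qed

text \<open>Along a glide the \<open>x\<close>-degree and the \<open>\<beta>\<close>-degree grow by the same excess.\<close>
definition precedes_beta :: "nat list \<times> nat \<Rightarrow> nat list \<times> nat \<Rightarrow> bool" where
  "precedes_beta = (\<lambda>(v, e) (w, f). precedes v w \<and> sum_list w + e = sum_list v + f)"

lemma asymp_precedes_beta: "asymp precedes_beta"
  using asymp_precedes by (auto intro!: asympI simp: precedes_beta_def dest: asympD)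

lemma transp_precedes_beta: "transp precedes_beta"
  using transp_precedes by (auto intro!: transpI simp: precedes_beta_def dest: transpD)

lemma finite_precedes_beta: "finite {y. precedes_beta (v, e) y}"
proof -
  have "y \<in> (\<lambda>w. (w, e + sum_list w - sum_list v)) ` {w. precedes v w}"
    if "precedes_beta (v, e) y" for y
  proof -
    obtain w f where y: "y = (w, f)"
      by (cases y)
    then have "precedes v w" "sum_list w + e = sum_list v + f"
      using that by (simp_all add: precedes_beta_def)
    then show ?thesis
      unfolding y by (intro image_eqI[of _ _ w]) auto
  qed
  then show ?thesis
    by (intro finite_subset[OF _ finite_imageI[OF finite_precedes]]) blast
qed

lemma glide_poly_Z_basis:
  "Z_basis {(k, a). length a = n} (\<lambda>(k, a). beta_pow_mult k (glide_poly a)) (polys_beta n)"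
proof -
  let ?g = "\<lambda>(k, a). beta_pow_mult k (glide_poly a)" and ?L = "\<lambda>(k, a). (a, k)"
  have polys_beta: "polys_beta n = fin_supp_on {(v, e). length v = n}"
    by (auto simp: polys_beta_def fin_supp_on_def)
  show ?thesis
    unfolding polys_beta
  proof (rule unitriangular_Z_basis[where L = ?L and R = precedes_beta])
    show "bij_betw ?L {(k, a). length a = n} {(v, e). length v = n}"
      by (rule bij_betw_byWitness[where f' = "\<lambda>(a, k). (k, a)"]) auto
    show "?g i (?L i) = 1" for i
    proof (cases i)
      case (Pair k a)
      have "{b. is_glide a b \<and> map fst b = a \<and> ex b = 0} = {all_black a}"
        using glides_with_values_self[of a] by (auto simp: ex_def all_black_def)
      then show ?thesis
        by (simp add: Pair beta_pow_mult_def glide_poly_def)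
    qed
    show "m = ?L i \<or> precedes_beta (?L i) m" if "?g i m \<noteq> 0" for i m
    proof -
      obtain k a v e where im: "i = (k, a)" "m = (v, e)"
        by (cases i, cases m)
      have "beta_pow_mult k (glide_poly a) (v, e) \<noteq> 0"
        using that by (simp add: im)
      then show ?thesis
      proof (rule beta_pow_mult_glide_poly_nonzero)
        fix b assume b: "is_glide a b" "map fst b = v" "k + ex b = e"
        then show ?thesis
          using glide_all_black_or_precedes[OF b(1)] sum_list_glide[OF b(1)] im
          by (auto simp: precedes_beta_def ex_def all_black_def comp_def)
      qed
    qed
    show "?g i \<in> fin_supp_on {(v, e). length v = n}" if i_in: "i \<in> {(k, a). length a = n}" for i
    proof -
      obtain k a where i: "i = (k, a)" "length a = n"
        using i_in by blast
      have "{m. beta_pow_mult k (glide_poly a) m \<noteq> 0}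
          \<subseteq> (\<lambda>b. (map fst b, k + ex b)) ` {b. is_glide a b}"
        by (force elim: beta_pow_mult_glide_poly_nonzero)
      then show ?thesis
        using i finite_glides length_glide
        by (force simp: fin_supp_on_def intro: finite_surj elim: beta_pow_mult_glide_poly_nonzero)
    qed
    show "finite {y \<in> {(v, e). length v = n}. precedes_beta x y}" for x
      using finite_precedes_beta[of "fst x" "snd x"] by (auto intro: finite_subset)
  qed (simp_all add: asymp_precedes_beta transp_precedes_beta)
qed

theorem mainTheorem1:
  fixes n :: nat
  assumes "n \<ge> 1"
  shows "Z_basis {(k, a). length a = n} (\<lambda>(k, a). beta_pow_mult k (glide_poly a)) (polys_beta n)
         \<and> Z_basis {a. length a = n} glide_poly_m1 (polys n)"
  using glide_poly_Z_basis glide_poly_m1_Z_basis by blast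

end
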